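(* Let $q$ be a power of $2$, $k\ge1$, and let $T=\{x\in\mathbb{F}_{q^{3k}}:\mathrm{Tr}_{q^{3k}/q^k}(x)=0\}$. Then for every $c\in\mathbb{F}_{q^{3k}}\setminus\mathbb{F}_{q^k}$, \[ \sum_{x\in T}(-1)^{\mathrm{Tr}_{q^{3k}/2}\left(c\,x^{1+2q^k+q^{2k}}\right)}=0. \]
   Context: $\mathbb{F}_m$ denotes the finite field with $m$ elements. $\mathrm{Tr}_{q^{3k}/q^k}(x)=x+x^{q^k}+x^{q^{2k}}$ is the relative trace to the subfield $\mathbb{F}_{q^k}$, and $\mathrm{Tr}_{q^{3k}/2}$ is the absolute trace from $\mathbb{F}_{q^{3k}}$ to $\mathbb{F}_2$. *)

theory Defs
  imports Main
begin

definition rel_trace :: "nat \<Rightarrow> nat \<Rightarrow> 'a::field \<Rightarrow> 'a" where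
  "rel_trace q k x = x + x ^ (q ^ k) + x ^ (q ^ (2 * k))"

definition abs_trace :: "nat \<Rightarrow> 'a::field \<Rightarrow> 'a" where
  "abs_trace n x = (\<Sum>i<n. x ^ (2 ^ i))"

text \<open>(-1)^t for t in F_2 (embedded in the field): 1 if t = 0, -1 otherwise.\<close>
definition add_char :: "'a::field \<Rightarrow> int" where
  "add_char t = (if t = 0 then 1 else -1)"

end

(* Put Q = q^k, K = F_Q and E = 1 + 2Q + Q^2.  For l in K - {0} the substitution x -> l x
   permutes T and multiplies c x^E by l^E = l^4, and l -> l^4 permutes K - {0}; averaging over l
   turns (Q - 1) times the sum into  sum_(x in T) (sum_(mu in K) (-1)^Tr(mu c x^E) - 1).
   The complete character sum over K is Q or 0 according as Tr (c x^E) vanishes or not.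
   Since x^E = N(x) x^Q with the norm N(x) in K, Tr (c x^E) = 0 iff Tr (c^(Q^2) x) = 0, and as
   c is not in K this second K-linear condition cuts T (of size Q^2) down to Q elements.
   Hence (Q - 1) times the sum is Q * Q - Q^2 = 0. *)

theory Submission
  imports Defs "HOL-Computational_Algebra.Polynomial" "HOL-Computational_Algebra.Primes"
begin

lemma power_card_UNIV_eq_self:
  fixes x :: "'a::{finite,field}"
  shows "x ^ card (UNIV :: 'a set) = x"
proof (cases "x = 0")
  case False
  have "(\<Prod>y\<in>UNIV-{0}. x * y) = (\<Prod>y\<in>UNIV-{0}. y)"
    by (rule prod.reindex_bij_witness[of _ "\<lambda>y. y / x" "\<lambda>y. x * y"]) (use False in auto)
  then have "x ^ (card (UNIV :: 'a set) - 1) = 1"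
    by (simp add: prod.distrib card_Diff_subset)
  moreover have "card (UNIV :: 'a set) = Suc (card (UNIV :: 'a set) - 1)"
    using finite_UNIV_card_ge_0[where 'a = 'a] by simp
  ultimately show ?thesis
    by (metis power_Suc mult_1_right)
qed (use finite_UNIV_card_ge_0[where 'a = 'a] in auto)

lemma CHAR_eq_2_if_card_UNIV_eq_power_2:
  assumes "card (UNIV :: 'a::{finite,field} set) = 2 ^ n"
  shows "CHAR('a) = 2"
proof -
  have "n \<noteq> 0"
  proof
    assume "n = 0"
    then obtain a :: 'a where "UNIV = {a}"
      using assms card_1_singletonE by auto
    then show False
      by (metis UNIV_I singletonD zero_neq_one)
  qed
  then have "(-1 :: 'a) = 1"
    using power_card_UNIV_eq_self[of "-1 :: 'a"] assms by simp
  then have "of_nat 2 = (0 :: 'a)"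
    by (metis add.right_inverse of_nat_numeral one_add_one)
  then have "CHAR('a) dvd 2"
    by (simp only: of_nat_eq_0_iff_char_dvd)
  then have "CHAR('a) = 1 \<or> CHAR('a) = 2"
    using two_is_prime_nat unfolding prime_nat_iff by blast
  then show ?thesis
    using CHAR_not_1[where 'a = 'a] by auto
qed

lemma card_UNIV_eq_card_range_mult_card_kernel:
  fixes h :: "'a::{finite,ab_group_add} \<Rightarrow> 'b::ab_group_add"
  assumes additive: "\<And>x y. h (x + y) = h x + h y"
  shows "card (UNIV :: 'a set) = card (range h) * card {x. h x = 0}"
proof -
  have diff: "h (x - y) = h x - h y" for x y
    using additive[of "x - y" y] by (simp add: algebra_simps)
  have "card (UNIV :: 'a set) = (\<Sum>v\<in>range h. card {x. h x = v})"
    by (subst card_UN_disjoint[symmetric]) (auto intro: arg_cong[where f = card])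
  also have "\<dots> = (\<Sum>v\<in>range h. card {x. h x = 0})"
  proof (rule sum.cong[OF refl])
    fix v assume "v \<in> range h"
    then obtain a where "v = h a" by auto
    then have "bij_betw (\<lambda>z. z + a) {x. h x = 0} {x. h x = v}"
      by (intro bij_betw_byWitness[where f' = "\<lambda>z. z - a"]) (auto simp: additive diff)
    then show "card {x. h x = v} = card {x. h x = 0}"
      by (simp add: bij_betw_same_card)
  qed
  finally show ?thesis by simp
qed

lemma factors_eq_if_mult_eq_and_le:
  fixes a b A B :: nat
  assumes "a * b = A * B" "a \<le> A" "b \<le> B" "0 < A" "0 < B"
  shows "a = A \<and> b = B"
proof -
  have "0 < b"
    using assms by (metis mult_is_0 neq0_conv)
  have "a = A"
  proof (rule ccontr)
    assume "a \<noteq> A"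
    with assms(2) \<open>0 < b\<close> have "a * b < A * b"
      by simp
    also have "\<dots> \<le> A * B"
      using assms(3) by simp
    finally show False
      using assms(1) by simp
  qed
  with assms(1,4) show ?thesis
    by simp
qed

lemma card_roots_monom_add_le:
  fixes p :: "'a::idom poly"
  assumes "degree p < n"
  shows "card {x. x ^ n + poly p x = 0} \<le> n"
proof -
  have deg: "degree (monom 1 n + p) = n"
    using assms by (simp add: degree_add_eq_left degree_monom_eq)
  then have "monom 1 n + p \<noteq> 0"
    using assms by auto
  then have "card {x. poly (monom 1 n + p) x = 0} \<le> n"
    using card_poly_roots_bound deg by metis
  then show ?thesis
    by (simp add: poly_monom)
qed

lemma sum_lessThan_add:
  "(\<Sum>i<m + n. f i) = (\<Sum>i<m. f i) + (\<Sum>i<n. f (m + i))" for m n :: nat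
  by (induction n) (simp_all add: ac_simps)

lemma power_two_power_add_CHAR_2:
  fixes x y :: "'a::comm_semiring_1"
  assumes "CHAR('a) = 2"
  shows "(x + y) ^ 2 ^ i = x ^ 2 ^ i + y ^ 2 ^ i"
  by (rule freshmans_dream') (simp_all add: assms)

lemma abs_trace_0 [simp]: "abs_trace n 0 = 0"
  by (simp add: abs_trace_def power_0_left)

lemma abs_trace_add:
  fixes x y :: "'a::field"
  assumes "CHAR('a) = 2"
  shows "abs_trace n (x + y) = abs_trace n x + abs_trace n y"
  unfolding abs_trace_def by (simp add: power_two_power_add_CHAR_2[OF assms] sum.distrib)

lemma abs_trace_eq_0_or_1:
  fixes x :: "'a::field"
  assumes "CHAR('a) = 2" and "x ^ 2 ^ n = x"
  shows "abs_trace n x = 0 \<or> abs_trace n x = 1"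
proof -
  define t where "t = abs_trace n x"
  have "t ^ 2 = (\<Sum>i<n. x ^ 2 ^ Suc i)"
    unfolding t_def abs_trace_def
    by (subst freshmans_dream_sum'[of 2 1]) (simp_all add: assms power_mult[symmetric] mult.commute)
  then have "x + t ^ 2 = (\<Sum>i<Suc n. x ^ 2 ^ i)"
    by (subst sum.lessThan_Suc_shift) simp
  also have "\<dots> = x + t"
    by (simp add: t_def abs_trace_def assms(2) add.commute)
  finally have "t ^ 2 = t"
    by simp
  then have "t * (t - 1) = 0"
    by (simp add: algebra_simps power2_eq_square)
  then show ?thesis
    unfolding t_def by auto
qed

lemma degree_abs_trace_poly:
  "n \<ge> 1 \<Longrightarrow> degree (\<Sum>i<n. monom (1::'a::field) (2 ^ i)) = 2 ^ (n - 1)"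
proof (induction n rule: dec_induct)
  case (step n)
  have "2 ^ (n - 1) < (2::nat) ^ n"
    using step by (cases n) auto
  then show ?case
    using step by (simp add: degree_add_eq_right degree_monom_eq)
qed (simp add: degree_monom_eq)

lemma ex_abs_trace_nonzero:
  fixes S :: "'a::field set"
  assumes "card S = 2 ^ n" and "n \<ge> 1"
  shows "\<exists>s\<in>S. abs_trace n s \<noteq> 0"
proof (rule ccontr)
  define p :: "'a poly" where "p = (\<Sum>i<n. monom 1 (2 ^ i))"
  have deg: "degree p = 2 ^ (n - 1)"
    unfolding p_def using degree_abs_trace_poly assms(2) by blast
  then have "p \<noteq> 0"
    by auto
  have roots: "{s. abs_trace n s = 0} = {s. poly p s = 0}"
    unfolding p_def abs_trace_def by (simp add: poly_sum poly_monom)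
  assume "\<not> (\<exists>s\<in>S. abs_trace n s \<noteq> 0)"
  then have "S \<subseteq> {s. poly p s = 0}"
    unfolding roots[symmetric] by auto
  then have "card S \<le> card {s. poly p s = 0}"
    using poly_roots_finite[OF \<open>p \<noteq> 0\<close>] by (rule card_mono[rotated])
  also have "\<dots> \<le> 2 ^ (n - 1)"
    using card_poly_roots_bound[OF \<open>p \<noteq> 0\<close>] deg by simp
  also have "\<dots> < 2 ^ n"
    using assms(2) by simp
  finally show False
    using assms(1) by simp
qed

locale char2_cubic_extension =
  fixes Q e :: nat and field_type :: "'a::{finite,field} itself"
  assumes e_ge_1: "e \<ge> 1" and Q_eq: "Q = 2 ^ e" and card_UNIV: "card (UNIV :: 'a set) = Q ^ 3"
begin

lemma Q_ge_2: "Q \<ge> 2"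
  using Q_eq e_ge_1 power_increasing[of 1 e "2::nat"] by simp

lemma CHAR_2: "CHAR('a) = 2"
  using CHAR_eq_2_if_card_UNIV_eq_power_2[of "e * 3"] card_UNIV Q_eq by (simp add: power_mult)

lemma two_eq_0: "(2::'a) = 0"
  using of_nat_CHAR[where 'a = 'a] CHAR_2 by simp

lemma add_eq_0_iff_eq: "(x::'a) + y = 0 \<longleftrightarrow> x = y"
  by (metis CHAR_2 uminus_CHAR_2 add_eq_0_iff2)

lemma add_self [simp]: "(x::'a) + x = 0"
  using add_eq_0_iff_eq by blast

lemma frobenius_add: "((x::'a) + y) ^ Q = x ^ Q + y ^ Q"
  unfolding Q_eq by (rule power_two_power_add_CHAR_2[OF CHAR_2])

lemma frobenius_cube [simp]: "(((x::'a) ^ Q) ^ Q) ^ Q = x"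
  using power_card_UNIV_eq_self[of x] card_UNIV by (simp add: power_mult[symmetric] power3_eq_cube)

definition tr :: "'a \<Rightarrow> 'a" where
  "tr x = x + x ^ Q + (x ^ Q) ^ Q"

definition K :: "'a set" where
  "K = {x. x ^ Q = x}"

definition T :: "'a set" where
  "T = {x. tr x = 0}"

lemma zero_in_K: "0 \<in> K"
  unfolding K_def using Q_ge_2 by simp

lemma K_add: "a \<in> K \<Longrightarrow> b \<in> K \<Longrightarrow> a + b \<in> K"
  unfolding K_def by (simp add: frobenius_add)

lemma K_mult: "a \<in> K \<Longrightarrow> b \<in> K \<Longrightarrow> a * b \<in> K"
  unfolding K_def by (simp add: power_mult_distrib)

lemma K_inverse: "a \<in> K \<Longrightarrow> inverse a \<in> K"
  unfolding K_def by (simp add: power_inverse)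

lemma K_power: "a \<in> K \<Longrightarrow> a ^ n \<in> K"
  unfolding K_def by (simp add: power_mult[symmetric] mult.commute[of _ Q]) (simp add: power_mult)

lemma tr_power_Q: "tr (x ^ Q) = tr x"
  unfolding tr_def by (simp add: algebra_simps)

lemma tr_in_K: "tr x \<in> K"
  unfolding tr_def K_def by (simp add: frobenius_add algebra_simps)

lemma tr_mult_K: "\<mu> \<in> K \<Longrightarrow> tr (\<mu> * x) = \<mu> * tr x"
  unfolding tr_def K_def by (simp add: algebra_simps)

lemma card_K_le: "card K \<le> Q"
proof -
  have "K = {x. x ^ Q + poly [:0, 1:] x = 0}"
    unfolding K_def by (simp add: add_eq_0_iff_eq)
  then show ?thesis
    using card_roots_monom_add_le[of "[:0, 1:]" Q] Q_ge_2 by simp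
qed

lemma card_T_le: "card T \<le> Q ^ 2"
proof -
  define p :: "'a poly" where "p = monom 1 Q + [:0, 1:]"
  have "degree p < Q ^ 2"
    unfolding p_def using Q_ge_2 by (simp add: degree_add_eq_left degree_monom_eq power2_eq_square)
  then have "card {x. x ^ Q ^ 2 + poly p x = 0} \<le> Q ^ 2"
    by (rule card_roots_monom_add_le)
  moreover have "T = {x. x ^ Q ^ 2 + poly p x = 0}"
    unfolding T_def tr_def p_def by (simp add: poly_monom power2_eq_square power_mult algebra_simps)
  ultimately show ?thesis
    by simp
qed

text \<open>The additive map \<open>y \<mapsto> y + y ^ Q\<close> has kernel \<open>K\<close> and image inside \<open>T\<close>; together
  with the root bounds above this pins down both cardinalities.\<close>
lemma card_K_and_T: "card K = Q \<and> card T = Q ^ 2"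
proof -
  define h where "h y = y + y ^ Q" for y :: 'a
  have "h (x + y) = h x + h y" for x y
    unfolding h_def by (simp add: frobenius_add algebra_simps)
  moreover have "{x. h x = 0} = K"
    unfolding h_def K_def by (auto simp: add_eq_0_iff_eq)
  ultimately have card_mult: "card (range h) * card K = Q ^ 2 * Q"
    using card_UNIV_eq_card_range_mult_card_kernel[of h] card_UNIV
    by (simp add: power3_eq_cube power2_eq_square)
  have "range h \<subseteq> T"
    unfolding h_def T_def tr_def by (auto simp: frobenius_add algebra_simps)
  then have range_le: "card (range h) \<le> card T"
    by (simp add: card_mono)
  have "card (range h) = Q ^ 2 \<and> card K = Q"
    using card_T_le Q_ge_2
    by (intro factors_eq_if_mult_eq_and_le[OF card_mult _ card_K_le]) (use range_le in simp_all)
  with range_le card_T_le show ?thesis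
    by simp
qed

lemmas card_K = card_K_and_T[THEN conjunct1]
lemmas card_T = card_K_and_T[THEN conjunct2]

lemma abs_trace_tr: "abs_trace (3 * e) y = abs_trace e (tr y)"
proof -
  have "(y ^ Q) ^ 2 ^ i = y ^ 2 ^ (e + i)" for y :: 'a and i
    by (simp add: Q_eq power_mult[symmetric] power_add)
  then have "abs_trace e (tr y) = (\<Sum>i<e. y ^ 2 ^ i + y ^ 2 ^ (e + i) + y ^ 2 ^ (e + (e + i)))"
    unfolding abs_trace_def tr_def by (simp add: power_two_power_add_CHAR_2[OF CHAR_2])
  also have "\<dots> = (\<Sum>i<e + (e + e). y ^ 2 ^ i)"
    unfolding sum_lessThan_add by (simp add: sum.distrib add.assoc)
  finally show ?thesis
    unfolding abs_trace_def by (simp add: numeral_3_eq_3)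
qed

lemma sum_K_add_char_abs_trace: "(\<Sum>s\<in>K. add_char (abs_trace e s)) = 0"
proof -
  have fixed: "s ^ 2 ^ e = s" if "s \<in> K" for s
    using that unfolding K_def by (simp add: Q_eq[symmetric])
  obtain s0 where s0: "s0 \<in> K" "abs_trace e s0 \<noteq> 0"
    using ex_abs_trace_nonzero[of K e] card_K Q_eq e_ge_1 by auto
  then have "abs_trace e s0 = 1"
    using abs_trace_eq_0_or_1[OF CHAR_2 fixed] by blast
  then have flip: "add_char (abs_trace e (s + s0)) = - add_char (abs_trace e s)" if "s \<in> K" for s
    using abs_trace_eq_0_or_1[OF CHAR_2 fixed[OF that]]
    by (auto simp: abs_trace_add[OF CHAR_2] add_char_def)
  have "bij_betw (\<lambda>s. s + s0) K K"
    by (rule bij_betw_byWitness[where f' = "\<lambda>s. s + s0"]) (auto simp: K_add s0(1) add.assoc)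
  then have "(\<Sum>s\<in>K. add_char (abs_trace e s)) = (\<Sum>s\<in>K. add_char (abs_trace e (s + s0)))"
    by (rule sum.reindex_bij_betw[symmetric])
  also have "\<dots> = - (\<Sum>s\<in>K. add_char (abs_trace e s))"
    by (simp add: flip sum_negf)
  finally show ?thesis
    by simp
qed

lemma sum_K_add_char_abs_trace_mult:
  assumes "t \<in> K"
  shows "(\<Sum>\<mu>\<in>K. add_char (abs_trace e (\<mu> * t))) = (if t = 0 then int Q else 0)"
proof (cases "t = 0")
  case True
  then show ?thesis
    by (simp add: add_char_def card_K)
next
  case False
  have "bij_betw (\<lambda>\<mu>. \<mu> * t) K K"
    by (rule bij_betw_byWitness[where f' = "\<lambda>\<mu>. \<mu> * inverse t"])
      (use assms False in \<open>auto simp: K_mult K_inverse\<close>)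
  from sum.reindex_bij_betw[OF this, of "\<lambda>s. add_char (abs_trace e s)"] show ?thesis
    using sum_K_add_char_abs_trace False by simp
qed

definition chi :: "'a \<Rightarrow> int" where
  "chi w = add_char (abs_trace (3 * e) w)"

lemma sum_K_chi_mult: "(\<Sum>\<mu>\<in>K. chi (\<mu> * w)) = (if tr w = 0 then int Q else 0)"
proof -
  have "(\<Sum>\<mu>\<in>K. chi (\<mu> * w)) = (\<Sum>\<mu>\<in>K. add_char (abs_trace e (\<mu> * tr w)))"
    unfolding chi_def abs_trace_tr by (rule sum.cong) (simp_all add: tr_mult_K)
  then show ?thesis
    using sum_K_add_char_abs_trace_mult[OF tr_in_K] by simp
qed

lemma bij_betw_power4_K: "bij_betw (\<lambda>l. l ^ 4) (K - {0}) (K - {0})"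
proof -
  have "inj_on (\<lambda>l::'a. l ^ 4) (K - {0})"
  proof (rule inj_onI)
    fix l m :: 'a
    assume "l ^ 4 = m ^ 4"
    then have "(l + m) ^ 2 ^ 2 = 0"
      using power_two_power_add_CHAR_2[OF CHAR_2, of l m 2] by simp
    then show "l = m"
      by (simp add: add_eq_0_iff_eq)
  qed
  moreover have "(\<lambda>l. l ^ 4) ` (K - {0}) \<subseteq> K - {0}"
    by (auto simp: K_power)
  ultimately show ?thesis
    unfolding bij_betw_def by (simp add: endo_inj_surj)
qed

lemma sum_K_nonzero_chi_power4_mult:
  "(\<Sum>l\<in>K - {0}. chi (l ^ 4 * w)) = (if tr w = 0 then int Q else 0) - 1"
proof -
  have "(\<Sum>l\<in>K - {0}. chi (l ^ 4 * w)) = (\<Sum>\<mu>\<in>K - {0}. chi (\<mu> * w))"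
    using sum.reindex_bij_betw[OF bij_betw_power4_K, of "\<lambda>\<mu>. chi (\<mu> * w)"] by simp
  also have "\<dots> = (\<Sum>\<mu>\<in>K. chi (\<mu> * w)) - 1"
    using sum.remove[of K 0 "\<lambda>\<mu>. chi (\<mu> * w)"] zero_in_K
    by (simp add: chi_def add_char_def)
  finally show ?thesis
    by (simp add: sum_K_chi_mult)
qed

lemma power_exponent_unfold: "(x::'a) ^ (1 + 2 * Q + Q ^ 2) = x * (x ^ Q) ^ 2 * (x ^ Q) ^ Q"
  by (simp only: power_add power_one_right power2_eq_square mult.commute[of 2 Q] power_mult)

lemma power_exponent_K: "l \<in> K \<Longrightarrow> l ^ (1 + 2 * Q + Q ^ 2) = l ^ 4"
  unfolding power_exponent_unfold K_def by (simp add: power2_eq_square power4_eq_xxxx)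

text \<open>\<open>x ^ (1 + 2 * Q + Q ^ 2)\<close> is the norm \<open>x * x ^ Q * (x ^ Q) ^ Q \<in> K\<close> times \<open>x ^ Q\<close>,
  and \<open>tr\<close> is invariant under the Frobenius.\<close>
lemma tr_mult_power_exponent_unfold_0_iff:
  "tr (c * x ^ (1 + 2 * Q + Q ^ 2)) = 0 \<longleftrightarrow> tr ((c ^ Q) ^ Q * x) = 0"
proof (cases "x = 0")
  case True
  then show ?thesis
    using Q_ge_2 by simp
next
  case False
  define N where "N = x * x ^ Q * (x ^ Q) ^ Q"
  have "N \<in> K"
    unfolding N_def K_def by (simp add: algebra_simps)
  have "N \<noteq> 0"
    unfolding N_def using False by simp
  have "tr (c * x ^ (1 + 2 * Q + Q ^ 2)) = tr (N * (c * x ^ Q))"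
    unfolding power_exponent_unfold N_def by (simp add: power2_eq_square algebra_simps)
  also have "\<dots> = N * tr (((c * x ^ Q) ^ Q) ^ Q)"
    using \<open>N \<in> K\<close> by (simp add: tr_mult_K tr_power_Q)
  also have "((c * x ^ Q) ^ Q) ^ Q = (c ^ Q) ^ Q * x"
    by (simp add: power_mult_distrib)
  finally show ?thesis
    using \<open>N \<noteq> 0\<close> by simp
qed

text \<open>For \<open>d \<notin> K\<close> the \<open>K\<close>-linear forms \<open>tr\<close> and \<open>tr (d * _)\<close> are independent, so their
  common kernel is a \<open>K\<close>-line; \<open>x0\<close> is an explicit generator.\<close>
lemma dual_kernel_eq_K_multiples:
  assumes "d ^ Q \<noteq> d"
  defines "x0 \<equiv> d ^ Q + (d ^ Q) ^ Q"
  shows "x0 \<noteq> 0" and "{x \<in> T. tr (d * x) = 0} = (\<lambda>\<mu>. \<mu> * x0) ` K"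
proof -
  define a where "a = d ^ Q"
  define b where "b = a ^ Q"
  have b_Q: "b ^ Q = d"
    unfolding b_def a_def by simp
  have x0: "x0 = a + b" and x0_Q: "x0 ^ Q = b + d" and x0_QQ: "(x0 ^ Q) ^ Q = d + a"
    unfolding x0_def a_def b_def by (simp_all add: frobenius_add)
  show "x0 \<noteq> 0"
  proof
    assume "x0 = 0"
    then have "a = b"
      unfolding x0 by (simp add: add_eq_0_iff_eq)
    then have "b = d"
      using b_Q b_def by simp
    with \<open>a = b\<close> assms show False
      unfolding a_def by simp
  qed
  have "tr x0 = 2 * (a + b + d)"
    unfolding tr_def x0_QQ unfolding x0_Q unfolding x0 by algebra
  then have tr_x0: "tr x0 = 0"
    by (simp add: two_eq_0)
  have "tr (d * x0) = d * x0 + a * x0 ^ Q + b * (x0 ^ Q) ^ Q"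
    unfolding tr_def a_def b_def by (simp add: power_mult_distrib)
  also have "\<dots> = 2 * (d * a + a * b + b * d)"
    unfolding x0_QQ unfolding x0_Q unfolding x0 by algebra
  finally have tr_d_x0: "tr (d * x0) = 0"
    by (simp add: two_eq_0)
  show "{x \<in> T. tr (d * x) = 0} = (\<lambda>\<mu>. \<mu> * x0) ` K"
  proof (intro equalityI subsetI)
    fix x
    assume "x \<in> (\<lambda>\<mu>. \<mu> * x0) ` K"
    then obtain \<mu> where "\<mu> \<in> K" "x = \<mu> * x0"
      by auto
    then show "x \<in> {x \<in> T. tr (d * x) = 0}"
      using tr_mult_K[of \<mu> x0] tr_mult_K[of \<mu> "d * x0"] tr_x0 tr_d_x0
      by (simp add: T_def mult.left_commute)
  next
    fix x
    assume "x \<in> {x \<in> T. tr (d * x) = 0}"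
    then have "x + x ^ Q + (x ^ Q) ^ Q = 0" and "d * x + a * x ^ Q + b * (x ^ Q) ^ Q = 0"
      unfolding T_def tr_def a_def b_def by (simp_all add: power_mult_distrib)
    then have "d * x + a * x ^ Q + b * (x + x ^ Q) = 0"
      by (simp add: add_eq_0_iff_eq)
    moreover have "d * x + a * x ^ Q + b * (x + x ^ Q) = (d + b) * x + (a + b) * x ^ Q"
      by algebra
    ultimately have "(d + b) * x = (a + b) * x ^ Q"
      by (simp add: add_eq_0_iff_eq)
    then have "x * x0 ^ Q = x ^ Q * x0"
      unfolding x0_Q unfolding x0 by (simp add: ac_simps)
    then have "(x / x0) ^ Q = x / x0"
      using \<open>x0 \<noteq> 0\<close> by (simp add: field_simps)
    then show "x \<in> (\<lambda>\<mu>. \<mu> * x0) ` K"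
      using \<open>x0 \<noteq> 0\<close> by (intro image_eqI[of _ _ "x / x0"]) (simp_all add: K_def)
  qed
qed

lemma card_dual_kernel:
  assumes "d ^ Q \<noteq> d"
  shows "card {x \<in> T. tr (d * x) = 0} = Q"
  using dual_kernel_eq_K_multiples[OF assms] card_K by (simp add: card_image inj_on_def)

lemma sum_T_mult_K:
  assumes "l \<in> K" and "l \<noteq> 0"
  shows "(\<Sum>x\<in>T. f (l * x)) = (\<Sum>x\<in>T. f x)"
proof -
  have "bij_betw ((*) l) T T"
    by (rule bij_betw_byWitness[where f' = "\<lambda>x. inverse l * x"])
      (use assms in \<open>auto simp: T_def tr_mult_K K_inverse\<close>)
  then show ?thesis
    by (rule sum.reindex_bij_betw)
qed

theorem sum_T_chi_eq_0:
  assumes "c ^ Q \<noteq> c"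
  shows "(\<Sum>x\<in>T. chi (c * x ^ (1 + 2 * Q + Q ^ 2))) = 0"
proof -
  define w where "w x = c * x ^ (1 + 2 * Q + Q ^ 2)" for x
  define S where "S = (\<Sum>x\<in>T. chi (w x))"
  define d where "d = (c ^ Q) ^ Q"
  have "d ^ Q \<noteq> d"
    using assms unfolding d_def by (metis frobenius_cube)
  have "(\<Sum>l\<in>K - {0}. S) = (\<Sum>l\<in>K - {0}. \<Sum>x\<in>T. chi (l ^ 4 * w x))"
  proof (rule sum.cong[OF refl])
    fix l
    assume l: "l \<in> K - {0}"
    then have "w (l * x) = l ^ 4 * w x" for x
      unfolding w_def using power_exponent_K[of l] by (simp add: power_mult_distrib)
    then show "S = (\<Sum>x\<in>T. chi (l ^ 4 * w x))"
      unfolding S_def using sum_T_mult_K[of l "\<lambda>x. chi (w x)"] l by simp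
  qed
  also have "\<dots> = (\<Sum>x\<in>T. \<Sum>l\<in>K - {0}. chi (l ^ 4 * w x))"
    by (rule sum.swap)
  also have "\<dots> = (\<Sum>x\<in>T. (if tr (d * x) = 0 then int Q else 0) - 1)"
    unfolding sum_K_nonzero_chi_power4_mult w_def d_def tr_mult_power_exponent_unfold_0_iff ..
  also have "\<dots> = int Q * int (card {x \<in> T. tr (d * x) = 0}) - int (card T)"
    by (simp add: sum_subtractf sum.inter_filter[symmetric])
  also have "\<dots> = 0"
    using card_dual_kernel[OF \<open>d ^ Q \<noteq> d\<close>] card_T by (simp add: power2_eq_square)
  finally have "int (card (K - {0})) * S = 0"
    by simp
  then show ?thesis
    using card_K Q_ge_2 zero_in_K by (simp add: S_def w_def)
qed

end

theorem mainTheorem6: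
  fixes c :: "'a::{finite,field}" and q m k :: nat
  assumes "q = 2 ^ m" and "m \<ge> 1" and "k \<ge> 1"
    and "card (UNIV :: 'a set) = q ^ (3 * k)"
    and "c ^ (q ^ k) \<noteq> c"
  shows "(\<Sum>x\<in>{x::'a. rel_trace q k x = 0}.
            add_char (abs_trace (3 * k * m) (c * x ^ (1 + 2 * q ^ k + q ^ (2 * k))))) = 0"
proof -
  have q_k: "q ^ k = 2 ^ (k * m)"
    using assms(1) by (simp add: power_mult[symmetric] mult.commute)
  have card: "card (UNIV :: 'a set) = (q ^ k) ^ 3"
    using assms(4) by (simp add: power_mult[symmetric] mult.commute)
  interpret char2_cubic_extension "q ^ k" "k * m" "TYPE('a)"
    by unfold_locales (use assms(2,3) q_k card in auto)
  have q_2k: "q ^ (2 * k) = q ^ k * q ^ k"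
    by (simp add: mult_2 power_add)
  have "{x::'a. rel_trace q k x = 0} = T"
    unfolding T_def tr_def rel_trace_def q_2k by (simp add: power_mult)
  then show ?thesis
    using sum_T_chi_eq_0[OF assms(5)] unfolding chi_def q_2k by (simp add: power2_eq_square mult.assoc)
qed

end
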